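(* Let $a,b$ be positive integers and $c$ an integer with $-b<c<a$, and suppose that $E_{(-b,c,a)}^{(\infty,\infty,\infty)}=\bigoplus_{r\in\mathbb{Z}}A_r$ is of full support. Then for every even integer $r$, the component $A_r$ contains infinitely many monomials of even length with pairwise disjoint supports.
   Context: $E$ is the Grassmann algebra of an infinite-dimensional vector space with basis $e_1,e_2,\dots$; monomials are $1$ and $e_{i_1}\cdots e_{i_k}$ with $i_1<\dots<i_k$, of length $k$ and support $\{e_{i_1},\dots,e_{i_k}\}$. For pairwise distinct integers $r_1,r_2,r_3$, $E_{(r_1,r_2,r_3)}^{(\infty,\infty,\infty)}=\bigoplus_rA_r$ is the $\mathbb{Z}$-grading obtained by splitting $\{e_i\}$ into three disjoint infinite sets, giving elements of the $j$-th set degree $r_j$ and monomials the sum of the degrees of their factors. Full support means $A_r\ne0$ for every $r\in\mathbb{Z}$. *)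

theory Defs
  imports Main
begin

text \<open>The Grassmann algebra E over a field 'k, with basis e_i (i :: nat), is spanned by the
monomials e_{i_1}...e_{i_k}, i_1 < ... < i_k, which we identify with their supports, i.e. finite
sets of indices {i_1,...,i_k} (the empty set being the monomial 1). As a vector space, an element
of E is a finitely supported family of coefficients indexed by monomials.\<close>

definition grassmann :: "(nat set \<Rightarrow> 'k::field) set" where
  "grassmann = {x. finite {M. x M \<noteq> 0} \<and> (\<forall>M. x M \<noteq> 0 \<longrightarrow> finite M)}"

definition monomial :: "nat set \<Rightarrow> (nat set \<Rightarrow> 'k::field)" where
  "monomial M = (\<lambda>N. if N = M then 1 else 0)"

definition mono_length :: "nat set \<Rightarrow> nat" where
  "mono_length M = card M"

definition mono_deg :: "(nat \<Rightarrow> int) \<Rightarrow> nat set \<Rightarrow> int" where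
  "mono_deg d M = (\<Sum>i\<in>M. d i)"

text \<open>Degree assignment of E^{(\<infinity>,\<infinity>,\<infinity>)}_{(r1,r2,r3)} for the splitting S1, S2, S3
of the generators: generators in S_j have degree r_j.\<close>
definition split_deg :: "nat set \<Rightarrow> nat set \<Rightarrow> nat set \<Rightarrow> int \<Rightarrow> int \<Rightarrow> int \<Rightarrow> nat \<Rightarrow> int" where
  "split_deg S1 S2 S3 r1 r2 r3 i = (if i \<in> S1 then r1 else if i \<in> S2 then r2 else r3)"

definition three_infinite_split :: "nat set \<Rightarrow> nat set \<Rightarrow> nat set \<Rightarrow> bool" where
  "three_infinite_split S1 S2 S3 \<longleftrightarrow>
     S1 \<union> S2 \<union> S3 = UNIV \<and> S1 \<inter> S2 = {} \<and> S1 \<inter> S3 = {} \<and> S2 \<inter> S3 = {} \<and>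
     infinite S1 \<and> infinite S2 \<and> infinite S3"

definition hcomp :: "(nat \<Rightarrow> int) \<Rightarrow> int \<Rightarrow> (nat set \<Rightarrow> 'k::field) set" where
  "hcomp d r = {x \<in> grassmann. \<forall>M. x M \<noteq> 0 \<longrightarrow> mono_deg d M = r}"

definition full_support :: "(int \<Rightarrow> (nat set \<Rightarrow> 'k::field) set) \<Rightarrow> bool" where
  "full_support A \<longleftrightarrow> (\<forall>r. A r \<noteq> {(\<lambda>_. 0)})"

end

theory Submission
  imports Defs "HOL-Library.Disjoint_Sets" "HOL-Library.Infinite_Set" "HOL-Library.Nat_Bijection"
begin

text \<open>A monomial with p generators from the first set, q from the second and s from the third
has degree -b p + c q + a s and length p + q + s, and since the three sets are infinite, every
triple (p, q, s) is realised by infinitely many monomials with pairwise disjoint supports. So it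
suffices to find, for even r, a triple of degree r and even length. Full support provides some
triple of degree r. If its length is odd, we add a triple of degree 0 and odd length, such as
(a, 0, b), (c, b, 0) or (0, a, -c); one of these has odd length unless a, b, c all have the same
parity. They cannot all be even, because degree 1 occurs; if they are all odd, then degree and
length of every triple have the same parity, so no correction is needed.\<close>

lemma sum_partition3:
  assumes "S1 \<union> S2 \<union> S3 = UNIV" "S1 \<inter> S2 = {}" "S1 \<inter> S3 = {}" "S2 \<inter> S3 = {}"
    and "finite M"
  shows "sum f M = sum f (M \<inter> S1) + sum f (M \<inter> S2) + sum f (M \<inter> S3)"
proof -
  have "M = (M \<inter> S1) \<union> (M \<inter> S2) \<union> (M \<inter> S3)"
    using assms(1) by blast
  also have "sum f \<dots> = sum f ((M \<inter> S1) \<union> (M \<inter> S2)) + sum f (M \<inter> S3)"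
    using assms(3-5) by (intro sum.union_disjoint) auto
  also have "sum f ((M \<inter> S1) \<union> (M \<inter> S2)) = sum f (M \<inter> S1) + sum f (M \<inter> S2)"
    using assms(2,5) by (intro sum.union_disjoint) auto
  finally show ?thesis .
qed

lemma mono_deg_split_deg:
  assumes "S1 \<union> S2 \<union> S3 = UNIV" "S1 \<inter> S2 = {}" "S1 \<inter> S3 = {}" "S2 \<inter> S3 = {}"
    and "finite M"
  shows "mono_deg (split_deg S1 S2 S3 r1 r2 r3) M
    = r1 * int (card (M \<inter> S1)) + r2 * int (card (M \<inter> S2)) + r3 * int (card (M \<inter> S3))"
proof -
  let ?d = "split_deg S1 S2 S3 r1 r2 r3"
  have const: "sum ?d (M \<inter> S) = sum (\<lambda>_. r) (M \<inter> S)"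
    if "\<And>i. i \<in> S \<Longrightarrow> ?d i = r" for S r
    using that by (intro sum.cong) auto
  have "sum ?d (M \<inter> S1) = sum (\<lambda>_. r1) (M \<inter> S1)"
    by (rule const) (simp add: split_deg_def)
  moreover have "sum ?d (M \<inter> S2) = sum (\<lambda>_. r2) (M \<inter> S2)"
    by (rule const) (use assms(2) in \<open>auto simp: split_deg_def\<close>)
  moreover have "sum ?d (M \<inter> S3) = sum (\<lambda>_. r3) (M \<inter> S3)"
    by (rule const) (use assms(3,4) in \<open>auto simp: split_deg_def\<close>)
  ultimately show ?thesis
    unfolding mono_deg_def sum_partition3[OF assms] by (simp add: mult.commute)
qed

lemma card_partition3:
  assumes "S1 \<union> S2 \<union> S3 = UNIV" "S1 \<inter> S2 = {}" "S1 \<inter> S3 = {}" "S2 \<inter> S3 = {}"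
    and "finite M"
  shows "card M = card (M \<inter> S1) + card (M \<inter> S2) + card (M \<inter> S3)"
  using sum_partition3[OF assms, of "\<lambda>_. 1 :: nat"] by simp

lemma infinite_obtains_disjoint_family_card:
  assumes "infinite S"
  obtains B :: "nat \<Rightarrow> 'a set"
  where "\<And>n. B n \<subseteq> S" "\<And>n. finite (B n)" "\<And>n. card (B n) = k" "disjoint_family B"
proof -
  obtain f :: "nat \<Rightarrow> 'a" where f: "inj f" "range f \<subseteq> S"
    using infinite_countable_subset[OF assms] by blast
  define B where "B n = (\<lambda>i. f (prod_encode (n, i))) ` {..<k}" for n
  have inj_pair: "f (prod_encode (n, i)) = f (prod_encode (m, j)) \<longleftrightarrow> n = m \<and> i = j"
    for n m i j
    using f(1) by (auto dest: injD)
  show thesis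
  proof (rule that)
    show "B n \<subseteq> S" "finite (B n)" for n
      using f(2) by (auto simp: B_def)
    show "card (B n) = k" for n
      unfolding B_def by (subst card_image) (auto simp: inj_on_def inj_pair)
    show "disjoint_family B"
      by (auto simp: disjoint_family_on_def B_def inj_pair)
  qed
qed

lemma infinite_disjoint_sets_with_counts:
  fixes S1 S2 S3 :: "'a set"
  assumes "S1 \<inter> S2 = {}" "S1 \<inter> S3 = {}" "S2 \<inter> S3 = {}"
    and "infinite S1" "infinite S2" "infinite S3" and "p + q + s > 0"
  shows "\<exists>F. infinite F \<and> disjoint F \<and>
    (\<forall>M\<in>F. finite M \<and> card (M \<inter> S1) = p \<and> card (M \<inter> S2) = q \<and> card (M \<inter> S3) = s)"
proof -
  obtain B1 :: "nat \<Rightarrow> 'a set"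
    where B1: "\<And>n. B1 n \<subseteq> S1" "\<And>n. finite (B1 n)" "\<And>n. card (B1 n) = p"
      "disjoint_family B1"
    using infinite_obtains_disjoint_family_card[OF assms(4)] by blast
  obtain B2 :: "nat \<Rightarrow> 'a set"
    where B2: "\<And>n. B2 n \<subseteq> S2" "\<And>n. finite (B2 n)" "\<And>n. card (B2 n) = q"
      "disjoint_family B2"
    using infinite_obtains_disjoint_family_card[OF assms(5)] by blast
  obtain B3 :: "nat \<Rightarrow> 'a set"
    where B3: "\<And>n. B3 n \<subseteq> S3" "\<And>n. finite (B3 n)" "\<And>n. card (B3 n) = s"
      "disjoint_family B3"
    using infinite_obtains_disjoint_family_card[OF assms(6)] by blast
  define M where "M n = B1 n \<union> B2 n \<union> B3 n" for n
  have counts: "M n \<inter> S1 = B1 n" "M n \<inter> S2 = B2 n" "M n \<inter> S3 = B3 n" for n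
    using B1(1)[of n] B2(1)[of n] B3(1)[of n] assms(1-3) by (auto simp: M_def)
  have "M n \<noteq> {}" for n
    using assms(7) B1(3)[of n] B2(3)[of n] B3(3)[of n] by (auto simp: M_def)
  moreover have "disjoint_family M"
    unfolding disjoint_family_on_def
  proof (intro ballI impI)
    fix m n :: nat
    assume "m \<noteq> n"
    then have "B1 m \<inter> B1 n = {}" "B2 m \<inter> B2 n = {}" "B3 m \<inter> B3 n = {}"
      using B1(4) B2(4) B3(4) by (auto dest: disjoint_family_onD)
    then show "M m \<inter> M n = {}"
      using B1(1) B2(1) B3(1) assms(1-3) unfolding M_def by blast
  qed
  ultimately have "disjoint (range M)" "inj M"
    using disjoint_family_on_iff_disjoint_image[of UNIV M] by simp_all
  show ?thesis
  proof (intro exI[of _ "range M"] conjI ballI)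
    show "infinite (range M)"
      using \<open>inj M\<close> by (rule range_inj_infinite)
    show "disjoint (range M)"
      by fact
    fix X
    assume "X \<in> range M"
    then obtain n where "X = M n"
      by blast
    then show "finite X" "card (X \<inter> S1) = p" "card (X \<inter> S2) = q" "card (X \<inter> S3) = s"
      using counts[of n] B1(2,3) B2(2,3) B3(2,3) by (simp_all add: M_def)
  qed
qed

lemma degree_zero_triple_odd_length:
  fixes a b c :: int
  assumes "a \<ge> 0" "b \<ge> 0" and "\<not> (even a = even b \<and> even b = even c)"
  shows "\<exists>p q s :: nat. - b * int p + c * int q + a * int s = 0 \<and> odd (p + q + s)"
proof -
  consider "even a \<noteq> even b" | "even a = even b" "c \<ge> 0" "even b \<noteq> even c"
    | "even a = even b" "c < 0" "even a \<noteq> even c"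
    using assms(3) by fastforce
  then show ?thesis
  proof cases
    case 1
    then have "- b * int (nat a) + c * int 0 + a * int (nat b) = 0 \<and> odd (nat a + 0 + nat b)"
      using assms(1,2) by (simp add: even_nat_iff flip: nat_add_distrib)
    then show ?thesis
      by blast
  next
    case 2
    then have "- b * int (nat c) + c * int (nat b) + a * int 0 = 0 \<and> odd (nat c + nat b + 0)"
      using assms(2) by (simp add: even_nat_iff flip: nat_add_distrib)
    then show ?thesis
      by blast
  next
    case 3
    then have "- b * int 0 + c * int (nat a) + a * int (nat (- c)) = 0
      \<and> odd (0 + nat a + nat (- c))"
      using assms(1) by (simp add: even_nat_iff flip: nat_add_distrib)
    then show ?thesis
      by blast
  qed
qed

lemma even_length_triple_of_even_degree:
  fixes a b c r :: int and p0 q0 s0 :: nat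
  assumes "a > 0" "b > 0" and "odd a \<or> odd b \<or> odd c"
    and "even r" and r: "r = - b * int p0 + c * int q0 + a * int s0"
  shows "\<exists>p q s :: nat.
    p + q + s > 0 \<and> r = - b * int p + c * int q + a * int s \<and> even (p + q + s)"
proof -
  have "\<exists>p q s :: nat. r = - b * int p + c * int q + a * int s \<and> even (p + q + s)"
  proof (cases "even a = even b \<and> even b = even c")
    case True
    then have "odd a" "odd b" "odd c"
      using assms(3) by auto
    then have "even (p0 + q0 + s0)"
      using \<open>even r\<close> r by (auto simp: even_add)
    then show ?thesis
      using r by blast
  next
    case False
    obtain pz qz sz :: nat
      where z: "- b * int pz + c * int qz + a * int sz = 0" "odd (pz + qz + sz)"
      using degree_zero_triple_odd_length[OF _ _ False] assms(1,2) by auto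
    show ?thesis
    proof (cases "even (p0 + q0 + s0)")
      case True
      then show ?thesis
        using r by blast
    next
      case False
      have "r = - b * int (p0 + pz) + c * int (q0 + qz) + a * int (s0 + sz)"
        using r z(1) by (simp add: algebra_simps)
      moreover have "even ((p0 + pz) + (q0 + qz) + (s0 + sz))"
      proof -
        have "(p0 + pz) + (q0 + qz) + (s0 + sz) = (p0 + q0 + s0) + (pz + qz + sz)"
          by simp
        then show ?thesis
          using False z(2) by (simp only: even_add)
      qed
      ultimately show ?thesis
        by blast
    qed
  qed
  then obtain p q s :: nat where "r = - b * int p + c * int q + a * int s" "even (p + q + s)"
    by blast
  moreover have "- b * int (2 * nat a) + a * int (2 * nat b) = 0"
    using assms(1,2) by simp
  ultimately have "r = - b * int (p + 2 * nat a) + c * int q + a * int (s + 2 * nat b)"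
    by (simp add: algebra_simps)
  moreover have "(p + 2 * nat a) + q + (s + 2 * nat b) = (p + q + s) + 2 * (nat a + nat b)"
    by simp
  ultimately show ?thesis
    using \<open>even (p + q + s)\<close> assms(1)
    by (intro exI[of _ "p + 2 * nat a"] exI[of _ q] exI[of _ "s + 2 * nat b"]) auto
qed

lemma full_support_hcompD:
  assumes "full_support (hcomp d :: int \<Rightarrow> (nat set \<Rightarrow> 'k::field) set)"
  shows "\<exists>M. finite M \<and> mono_deg d M = r"
proof -
  have "(\<lambda>_. 0 :: 'k) \<in> hcomp d r"
    unfolding hcomp_def grassmann_def by simp
  moreover have "hcomp d r \<noteq> {(\<lambda>_. 0 :: 'k)}"
    using assms unfolding full_support_def by blast
  ultimately obtain x :: "nat set \<Rightarrow> 'k" where "x \<in> hcomp d r" "x \<noteq> (\<lambda>_. 0)"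
    by blast
  then show ?thesis
    unfolding hcomp_def grassmann_def by fastforce
qed

lemma monomial_in_hcomp:
  assumes "finite M" "mono_deg d M = r"
  shows "(monomial M :: nat set \<Rightarrow> 'k::field) \<in> hcomp d r"
  using assms by (auto simp: hcomp_def grassmann_def monomial_def)

theorem lemma4p7:
  fixes a b c :: int and S1 S2 S3 :: "nat set"
  assumes "a > 0" and "b > 0" and "-b < c" and "c < a"
    and "three_infinite_split S1 S2 S3"
    and "full_support (hcomp (split_deg S1 S2 S3 (-b) c a) :: int \<Rightarrow> (nat set \<Rightarrow> 'k::field) set)"
  shows "\<forall>r::int. even r \<longrightarrow>
     (\<exists>F. infinite F \<and> pairwise disjnt F \<and>
          (\<forall>M\<in>F. finite M \<and> even (mono_length M) \<and>
               (monomial M :: nat set \<Rightarrow> 'k) \<in> hcomp (split_deg S1 S2 S3 (-b) c a) r))"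
proof (intro allI impI)
  fix r :: int
  assume "even r"
  let ?d = "split_deg S1 S2 S3 (-b) c a"
  have part: "S1 \<union> S2 \<union> S3 = UNIV" "S1 \<inter> S2 = {}" "S1 \<inter> S3 = {}" "S2 \<inter> S3 = {}"
    and inf: "infinite S1" "infinite S2" "infinite S3"
    using assms(5) unfolding three_infinite_split_def by auto
  note deg = mono_deg_split_deg[OF part, of _ "-b" c a]
  obtain M0 where M0: "finite M0" "mono_deg ?d M0 = r"
    using full_support_hcompD[OF assms(6)] by blast
  obtain M1 where M1: "finite M1" "mono_deg ?d M1 = 1"
    using full_support_hcompD[OF assms(6)] by blast
  have "odd a \<or> odd b \<or> odd c"
    using M1(2) deg[OF M1(1)] by (metis even_add even_mult_iff even_minus odd_one)
  then obtain p q s :: nat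
    where pqs: "p + q + s > 0" "r = - b * int p + c * int q + a * int s" "even (p + q + s)"
    using even_length_triple_of_even_degree[OF assms(1,2) _ \<open>even r\<close>] M0(2) deg[OF M0(1)]
    by metis
  obtain F where "infinite F" "disjoint F"
    and F: "\<forall>M\<in>F. finite M \<and> card (M \<inter> S1) = p \<and> card (M \<inter> S2) = q \<and> card (M \<inter> S3) = s"
    using infinite_disjoint_sets_with_counts[OF part(2-4) inf pqs(1)] by blast
  moreover have "finite M \<and> even (mono_length M) \<and> (monomial M :: nat set \<Rightarrow> 'k) \<in> hcomp ?d r"
    if "M \<in> F" for M
    using F that pqs deg[of M] card_partition3[OF part, of M]
    by (auto simp: mono_length_def intro: monomial_in_hcomp)
  ultimately show "\<exists>F. infinite F \<and> pairwise disjnt F \<and>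
      (\<forall>M\<in>F. finite M \<and> even (mono_length M) \<and> (monomial M :: nat set \<Rightarrow> 'k) \<in> hcomp ?d r)"
    by blast
qed

end
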